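(* Let $n\ge1$; for $i\in[n]$ let $d_i\ge1$, $p_{i0}<\cdots<p_{id_i}$ reals, $\mathcal{X}=\prod_i\{p_{i0},\dots,p_{id_i}\}$, $f_i:\{p_{i0},\dots,p_{id_i}\}\to[L_i,U_i]$, $g_i:\{p_{i0},\dots,p_{id_i}\}\to[L'_i,U'_i]$. Let $\phi:\prod_i[L_i,U_i]\to\mathbb{R}$ be submodular and $\varphi:\prod_i[L'_i,U'_i]\to\mathbb{R}$ supermodular, with $\phi(f_1(x_1),\dots,f_n(x_n))\ge0$ and $\varphi(g_1(x_1),\dots,g_n(x_n))>0$ for all $\boldsymbol{x}\in\mathcal{X}$. Let $\sigma=(\sigma_1,\dots,\sigma_n)$, each $\sigma_i$ a permutation of $\{0,\dots,d_i\}$, satisfy $f_i(p_{i,\sigma_i(0)})\le\cdots\le f_i(p_{i,\sigma_i(d_i)})$ and $g_i(p_{i,\sigma_i(0)})\le\cdots\le g_i(p_{i,\sigma_i(d_i)})$ for all $i$. For $\boldsymbol{j}\in\mathcal{G}=\prod_i\{0,\dots,d_i\}$ let $\psi^\sigma(\boldsymbol{j})=\phi(f_1(p_{1,\sigma_1(j_1)}),\dots,f_n(p_{n,\sigma_n(j_n)}))$ and $\theta^\sigma(\boldsymbol{j})=\varphi(g_1(p_{1,\sigma_1(j_1)}),\dots,g_n(p_{n,\sigma_n(j_n)}))$, and write $(L^{\sigma_i})^{-1}(\boldsymbol{z}_i)=A^{\sigma_i}\boldsymbol{z}_i+\boldsymbol{c}^{\sigma_i}$. Then $$\min_{\boldsymbol{x}\in\mathcal{X}}\frac{\phi(f_1(x_1),\dots,f_n(x_n))}{\varphi(g_1(x_1),\dots,g_n(x_n))}$$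 equals the optimal value of the linear program: minimize $\mu$ subject to, for every $\pi\in\Pi$ with point representation $\boldsymbol{j}^0,\dots,\boldsymbol{j}^N$, $$\mu\ge\psi^\sigma(\boldsymbol{j}^0)\rho+\sum_{t\in[N]}(\psi^\sigma(\boldsymbol{j}^t)-\psi^\sigma(\boldsymbol{j}^{t-1}))s'_{\pi_t},\qquad 1\le\theta^\sigma(\boldsymbol{j}^0)\rho+\sum_{t\in[N]}(\theta^\sigma(\boldsymbol{j}^t)-\theta^\sigma(\boldsymbol{j}^{t-1}))s'_{\pi_t},$$ and $\rho\ge s_{i1}\ge\cdots\ge s_{id_i}\ge0$, $\boldsymbol{s}'_i=A^{\sigma_i}\boldsymbol{s}_i+\boldsymbol{c}^{\sigma_i}\rho$ for all $i\in[n]$.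
   Context: $N=\sum_i d_i$. Sub/supermodularity on a box is with respect to componentwise max and min. Staircase: $\pi=(\pi_1,\dots,\pi_N)$, $\pi_t=(\pi_t(1),\pi_t(2))$, $\pi_t(1)\in[n]$ occurring exactly $d_i$ times for each $i$, $\pi_t(2)=|\{s\le t:\pi_s(1)=\pi_t(1)\}|$; $\Pi$ the set of staircases; $s'_{\pi_t}=s'_{\pi_t(1),\pi_t(2)}$; $\boldsymbol{j}^0=\boldsymbol{0}$, $\boldsymbol{j}^t=\boldsymbol{j}^{t-1}+\boldsymbol{e}_{\pi_t(1)}$. For each $i$: $T_i:\mathbb{R}^{d_i}\to\mathbb{R}^{d_i+1}$, $\lambda_{ij}=z_{ij}-z_{i,j+1}$ ($j=0,\dots,d_i$, $z_{i0}=1$, $z_{i,d_i+1}=0$), $T_i^{-1}:z_{ij}=\sum_{k=j}^{d_i}\lambda_{ik}$; $P^{\sigma_i}$ the permutation matrix with $(j,k)$ entry $1$ iff $j=\sigma_i(k)$; $L^{\sigma_i}=T_i^{-1}\circ P^{\sigma_i}\circ T_i$, an invertible affine map of $\mathbb{R}^{d_i}$. *)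

theory Defs
  imports Complex_Main "HOL-Library.FuncSet" "HOL-Combinatorics.Permutations"
begin

text \<open>Indices: coordinates i range over {..<n} (i.e. [n] shifted to 0-based);
  vectors in R^{d} are functions nat => real using entries 1..d, zero elsewhere;
  vectors in R^{d+1} use entries 0..d, zero elsewhere.\<close>

definition submodular_on :: "nat \<Rightarrow> (nat \<Rightarrow> real set) \<Rightarrow> ((nat \<Rightarrow> real) \<Rightarrow> real) \<Rightarrow> bool" where
  "submodular_on n B F \<longleftrightarrow>
     (\<forall>x\<in>Pi\<^sub>E {..<n} B. \<forall>y\<in>Pi\<^sub>E {..<n} B. F (sup x y) + F (inf x y) \<le> F x + F y)"

definition supermodular_on :: "nat \<Rightarrow> (nat \<Rightarrow> real set) \<Rightarrow> ((nat \<Rightarrow> real) \<Rightarrow> real) \<Rightarrow> bool" where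
  "supermodular_on n B F \<longleftrightarrow>
     (\<forall>x\<in>Pi\<^sub>E {..<n} B. \<forall>y\<in>Pi\<^sub>E {..<n} B. F (sup x y) + F (inf x y) \<ge> F x + F y)"

text \<open>Staircase, given by its first components pi_t(1) = stc ! (t-1), t = 1..N.\<close>
definition staircase :: "nat \<Rightarrow> (nat \<Rightarrow> nat) \<Rightarrow> nat list \<Rightarrow> bool" where
  "staircase n d stc \<longleftrightarrow> length stc = (\<Sum>i<n. d i) \<and> set stc \<subseteq> {..<n} \<and>
     (\<forall>i<n. count_list stc i = d i)"

definition stair2 :: "nat list \<Rightarrow> nat \<Rightarrow> nat" where
  "stair2 stc t = count_list (take t stc) (stc ! (t - 1))"

definition stair_pt :: "nat list \<Rightarrow> nat \<Rightarrow> nat \<Rightarrow> nat" where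
  "stair_pt stc t = (\<lambda>i. count_list (take t stc) i)"

definition zext :: "nat \<Rightarrow> (nat \<Rightarrow> real) \<Rightarrow> nat \<Rightarrow> real" where
  "zext d z j = (if j = 0 then 1 else if j \<le> d then z j else 0)"

definition Tmap :: "nat \<Rightarrow> (nat \<Rightarrow> real) \<Rightarrow> nat \<Rightarrow> real" where
  "Tmap d z = (\<lambda>j. if j \<le> d then zext d z j - zext d z (Suc j) else 0)"

definition Tinv :: "nat \<Rightarrow> (nat \<Rightarrow> real) \<Rightarrow> nat \<Rightarrow> real" where
  "Tinv d lam = (\<lambda>j. if 1 \<le> j \<and> j \<le> d then (\<Sum>k=j..d. lam k) else 0)"

definition Pmat :: "nat \<Rightarrow> (nat \<Rightarrow> nat) \<Rightarrow> (nat \<Rightarrow> real) \<Rightarrow> nat \<Rightarrow> real" where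
  "Pmat d \<sigma> lam = (\<lambda>j. if j \<le> d then (\<Sum>k=0..d. (if j = \<sigma> k then 1 else 0) * lam k) else 0)"

definition Lmap :: "nat \<Rightarrow> (nat \<Rightarrow> nat) \<Rightarrow> (nat \<Rightarrow> real) \<Rightarrow> nat \<Rightarrow> real" where
  "Lmap d \<sigma> = Tinv d \<circ> Pmat d \<sigma> \<circ> Tmap d"

definition Rvec :: "nat \<Rightarrow> (nat \<Rightarrow> real) set" where
  "Rvec d = {z. \<forall>j. (j = 0 \<or> d < j) \<longrightarrow> z j = 0}"

definition Linv :: "nat \<Rightarrow> (nat \<Rightarrow> nat) \<Rightarrow> (nat \<Rightarrow> real) \<Rightarrow> nat \<Rightarrow> real" where
  "Linv d \<sigma> = the_inv_into (Rvec d) (Lmap d \<sigma>)"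

text \<open>(L^sigma)^{-1}(z) = A^sigma z + c^sigma: c = (L^sigma)^{-1}(0), A z = (L^sigma)^{-1}(z) - c.\<close>
definition cvec :: "nat \<Rightarrow> (nat \<Rightarrow> nat) \<Rightarrow> nat \<Rightarrow> real" where
  "cvec d \<sigma> = Linv d \<sigma> (\<lambda>_. 0)"

definition Amul :: "nat \<Rightarrow> (nat \<Rightarrow> nat) \<Rightarrow> (nat \<Rightarrow> real) \<Rightarrow> nat \<Rightarrow> real" where
  "Amul d \<sigma> z = (\<lambda>j. Linv d \<sigma> z j - cvec d \<sigma> j)"

definition vrestr :: "nat \<Rightarrow> (nat \<Rightarrow> real) \<Rightarrow> nat \<Rightarrow> real" where
  "vrestr d z = (\<lambda>j. if 1 \<le> j \<and> j \<le> d then z j else 0)"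

definition LP_feasible_mu ::
  "nat \<Rightarrow> (nat \<Rightarrow> nat) \<Rightarrow> (nat \<Rightarrow> nat \<Rightarrow> nat) \<Rightarrow> ((nat \<Rightarrow> nat) \<Rightarrow> real) \<Rightarrow> ((nat \<Rightarrow> nat) \<Rightarrow> real) \<Rightarrow> real set" where
  "LP_feasible_mu n d \<sigma> \<psi> \<theta> = {\<mu>. \<exists>(\<rho>::real) (s::nat \<Rightarrow> nat \<Rightarrow> real) (s'::nat \<Rightarrow> nat \<Rightarrow> real).
     (\<forall>stc. staircase n d stc \<longrightarrow>
        \<mu> \<ge> \<psi> (stair_pt stc 0) * \<rho> +
            (\<Sum>t\<in>{1..(\<Sum>i<n. d i)}. (\<psi> (stair_pt stc t) - \<psi> (stair_pt stc (t - 1))) * s' (stc ! (t - 1)) (stair2 stc t)) \<and>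
        1 \<le> \<theta> (stair_pt stc 0) * \<rho> +
            (\<Sum>t\<in>{1..(\<Sum>i<n. d i)}. (\<theta> (stair_pt stc t) - \<theta> (stair_pt stc (t - 1))) * s' (stc ! (t - 1)) (stair2 stc t))) \<and>
     (\<forall>i<n. \<rho> \<ge> s i 1 \<and> (\<forall>j. 1 \<le> j \<and> j < d i \<longrightarrow> s i j \<ge> s i (Suc j)) \<and> s i (d i) \<ge> 0) \<and>
     (\<forall>i<n. \<forall>j. 1 \<le> j \<and> j \<le> d i \<longrightarrow>
        s' i j = Amul (d i) (\<sigma> i) (vrestr (d i) (s i)) j + cvec (d i) (\<sigma> i) j * \<rho>)}"

end

theory Submission
  imports Defs
begin

text \<open>For a grid point \<open>J\<close>, take \<open>\<rho> = 1 / \<theta> J\<close> and \<open>s'\<close> the indicator of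
  \<open>j \<le> J i\<close> scaled by \<open>\<rho>\<close>. Along every staircase the constraint expressions are then
  Lovasz-extension values at the vertex \<open>J\<close>, which submodularity of \<open>\<psi>\<close> bounds by \<open>\<psi> J\<close> from
  above and supermodularity of \<open>\<theta>\<close> bounds by \<open>\<theta> J\<close> from below; so the minimal ratio is
  feasible. Conversely, at a feasible point \<open>\<rho> > 0\<close> and \<open>s' = \<rho> z\<close>, where
  \<open>z i = Linv (d i) (\<sigma> i) (s i / \<rho>)\<close> is again a decreasing chain in \<open>[0, 1]\<close>. The
  staircase that visits the entries of \<open>z\<close> in decreasing order turns the constraints into
  Abel sums of \<open>\<psi> - m \<theta> \<ge> 0\<close> against decreasing weights, whence \<open>\<mu> \<ge> m\<close>.\<close>

lemma Pmat_apply_perm: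
  assumes "\<sigma> permutes {0..d}" and "k \<le> d"
  shows "Pmat d \<sigma> lam (\<sigma> k) = lam k"
proof -
  have "\<sigma> k \<le> d"
    using permutes_in_image[OF assms(1)] assms(2) by simp
  moreover have "(\<Sum>k'=0..d. (if \<sigma> k = \<sigma> k' then 1 else 0) * lam k') = (\<Sum>k'=0..d. if k' = k then lam k' else 0)"
    by (rule sum.cong) (auto simp: permutes_inj[OF assms(1)] inj_eq)
  ultimately show ?thesis
    using assms(2) by (simp add: Pmat_def)
qed

lemma sum_Pmat:
  assumes "\<sigma> permutes {0..d}"
  shows "(\<Sum>j=0..d. Pmat d \<sigma> lam j) = (\<Sum>k=0..d. lam k)"
proof -
  have "(\<Sum>j=0..d. Pmat d \<sigma> lam j) = (\<Sum>k=0..d. Pmat d \<sigma> lam (\<sigma> k))"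
    using sum.permute[OF assms] by simp
  also have "\<dots> = (\<Sum>k=0..d. lam k)"
    by (rule sum.cong) (auto simp: Pmat_apply_perm[OF assms])
  finally show ?thesis .
qed

lemma sum_Tmap: "(\<Sum>j=0..d. Tmap d z j) = 1"
proof -
  have "(\<Sum>j=0..d. Tmap d z j) = - (\<Sum>j=0..d. zext d z (Suc j) - zext d z j)"
    by (simp add: Tmap_def sum_negf[symmetric])
  also have "\<dots> = 1"
    by (subst sum_Suc_diff) (auto simp: zext_def)
  finally show ?thesis .
qed

lemma Tinv_Tmap:
  assumes "z \<in> Rvec d"
  shows "Tinv d (Tmap d z) = z"
proof
  fix j
  show "Tinv d (Tmap d z) j = z j"
  proof (cases "1 \<le> j \<and> j \<le> d")
    case True
    have "(\<Sum>k=j..d. Tmap d z k) = - (\<Sum>k=j..d. zext d z (Suc k) - zext d z k)"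
      by (simp add: Tmap_def sum_negf[symmetric])
    also have "\<dots> = z j"
      using True by (subst sum_Suc_diff) (auto simp: zext_def)
    finally show ?thesis
      using True by (simp add: Tinv_def)
  next
    case False
    then have "j = 0 \<or> d < j"
      by auto
    then show ?thesis
      using assms False by (auto simp: Rvec_def Tinv_def)
  qed
qed

lemma Tmap_Tinv:
  assumes "\<forall>k>d. lam k = 0" and "(\<Sum>k=0..d. lam k) = 1"
  shows "Tmap d (Tinv d lam) = lam"
proof
  fix j
  consider "j = 0" | "1 \<le> j" "j \<le> d" | "d < j"
    by linarith
  then show "Tmap d (Tinv d lam) j = lam j"
  proof cases
    case 1
    then show ?thesis
      using assms(2) by (cases d) (auto simp: Tmap_def zext_def Tinv_def sum.atLeast_Suc_atMost)
  next
    case 2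
    then show ?thesis
      by (cases "j = d") (auto simp: Tmap_def zext_def Tinv_def sum.atLeast_Suc_atMost)
  next
    case 3
    then show ?thesis
      using assms(1) by (simp add: Tmap_def)
  qed
qed

lemma Tmap_Lmap:
  assumes "\<sigma> permutes {0..d}"
  shows "Tmap d (Lmap d \<sigma> x) = Pmat d \<sigma> (Tmap d x)"
  unfolding Lmap_def comp_def
  by (rule Tmap_Tinv) (simp add: Pmat_def, simp add: sum_Pmat[OF assms] sum_Tmap)

lemma Lmap_in_Rvec: "Lmap d \<sigma> x \<in> Rvec d"
  by (auto simp: Lmap_def Tinv_def Rvec_def)

lemma inj_on_Lmap:
  assumes \<sigma>: "\<sigma> permutes {0..d}"
  shows "inj_on (Lmap d \<sigma>) (Rvec d)"
proof
  fix x y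
  assume x: "x \<in> Rvec d" and y: "y \<in> Rvec d" and eq: "Lmap d \<sigma> x = Lmap d \<sigma> y"
  have "Tmap d x k = Tmap d y k" for k
  proof (cases "k \<le> d")
    case True
    then show ?thesis
      using eq Pmat_apply_perm[OF \<sigma> True] by (metis Tmap_Lmap[OF \<sigma>])
  qed (simp add: Tmap_def)
  then show "x = y"
    using Tinv_Tmap[OF x] Tinv_Tmap[OF y] by presburger
qed

lemma Lmap_image:
  assumes \<sigma>: "\<sigma> permutes {0..d}"
  shows "Lmap d \<sigma> ` Rvec d = Rvec d"
proof
  show "Lmap d \<sigma> ` Rvec d \<subseteq> Rvec d"
    using Lmap_in_Rvec by blast
  show "Rvec d \<subseteq> Lmap d \<sigma> ` Rvec d"
  proof
    fix z
    assume z: "z \<in> Rvec d"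
    define lam where "lam k = (if k \<le> d then Tmap d z (\<sigma> k) else 0)" for k
    define w where "w = Tinv d lam"
    have "(\<Sum>k=0..d. lam k) = 1"
      using sum.permute[OF \<sigma>, of "Tmap d z"] sum_Tmap[of d z] by (simp add: lam_def comp_def)
    then have Tw: "Tmap d w = lam"
      unfolding w_def by (intro Tmap_Tinv) (simp_all add: lam_def)
    have P: "Pmat d \<sigma> lam = Tmap d z"
    proof
      fix j
      show "Pmat d \<sigma> lam j = Tmap d z j"
      proof (cases "j \<le> d")
        case True
        then obtain k where "k \<le> d" "j = \<sigma> k"
          using permutes_image[OF \<sigma>] by (metis atLeastAtMost_iff image_iff zero_le)
        then show ?thesis
          using Pmat_apply_perm[OF \<sigma>] by (simp add: lam_def)
      qed (simp add: Tmap_def Pmat_def)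
    qed
    have "Lmap d \<sigma> w = z"
      using Tw P Tinv_Tmap[OF z] by (simp add: Lmap_def)
    moreover have "w \<in> Rvec d"
      by (auto simp: w_def Tinv_def Rvec_def)
    ultimately show "z \<in> Lmap d \<sigma> ` Rvec d"
      by blast
  qed
qed

lemma bij_betw_Lmap: "\<sigma> permutes {0..d} \<Longrightarrow> bij_betw (Lmap d \<sigma>) (Rvec d) (Rvec d)"
  by (simp add: bij_betw_def inj_on_Lmap Lmap_image)

lemma Linv_in_Rvec:
  assumes "\<sigma> permutes {0..d}" and "z \<in> Rvec d"
  shows "Linv d \<sigma> z \<in> Rvec d"
  using bij_betwE[OF bij_betw_the_inv_into[OF bij_betw_Lmap[OF assms(1)]]] assms(2)
  unfolding Linv_def by blast

lemma Lmap_Linv: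
  assumes "\<sigma> permutes {0..d}" and "z \<in> Rvec d"
  shows "Lmap d \<sigma> (Linv d \<sigma> z) = z"
  unfolding Linv_def by (rule f_the_inv_into_f_bij_betw[OF bij_betw_Lmap[OF assms(1)] assms(2)])

lemma Linv_Lmap:
  assumes "\<sigma> permutes {0..d}" and "w \<in> Rvec d"
  shows "Linv d \<sigma> (Lmap d \<sigma> w) = w"
  unfolding Linv_def
  by (rule the_inv_into_f_f[OF bij_betw_imp_inj_on[OF bij_betw_Lmap[OF assms(1)]] assms(2)])

lemma Lmap_affine:
  "Lmap d \<sigma> (\<lambda>j. a * x j + (1 - a) * y j) = (\<lambda>j. a * Lmap d \<sigma> x j + (1 - a) * Lmap d \<sigma> y j)"
proof -
  have "Tmap d (\<lambda>j. a * x j + (1 - a) * y j) = (\<lambda>j. a * Tmap d x j + (1 - a) * Tmap d y j)"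
    by (auto simp: Tmap_def zext_def algebra_simps fun_eq_iff)
  moreover have "Pmat d \<sigma> (\<lambda>j. a * u j + (1 - a) * v j) = (\<lambda>j. a * Pmat d \<sigma> u j + (1 - a) * Pmat d \<sigma> v j)"
    for u v
    by (auto simp: Pmat_def fun_eq_iff sum_distrib_left sum.distrib[symmetric] algebra_simps
        intro!: sum.cong)
  moreover have "Tinv d (\<lambda>j. a * u j + (1 - a) * v j) = (\<lambda>j. a * Tinv d u j + (1 - a) * Tinv d v j)"
    for u v
    by (auto simp: Tinv_def fun_eq_iff sum_distrib_left sum.distrib[symmetric] algebra_simps
        intro!: sum.cong)
  ultimately show ?thesis
    by (simp add: Lmap_def)
qed

lemma Amul_scale_add_cvec:
  assumes \<sigma>: "\<sigma> permutes {0..d}" and z: "z \<in> Rvec d"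
  shows "Amul d \<sigma> (\<lambda>j. r * z j) k + cvec d \<sigma> k * r = r * Linv d \<sigma> z k"
proof -
  have zero: "(\<lambda>_. 0) \<in> Rvec d"
    by (simp add: Rvec_def)
  define u where "u j = r * Linv d \<sigma> z j + (1 - r) * Linv d \<sigma> (\<lambda>_. 0) j" for j
  have "u \<in> Rvec d"
    using Linv_in_Rvec[OF \<sigma> z] Linv_in_Rvec[OF \<sigma> zero] by (auto simp: u_def Rvec_def)
  moreover have "Lmap d \<sigma> u = (\<lambda>j. r * z j)"
    unfolding u_def Lmap_affine Lmap_Linv[OF \<sigma> z] Lmap_Linv[OF \<sigma> zero] by simp
  ultimately have "Linv d \<sigma> (\<lambda>j. r * z j) = u"
    using Linv_Lmap[OF \<sigma>] by metis
  then show ?thesis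
    by (simp add: Amul_def cvec_def u_def algebra_simps)
qed

definition dec_chain :: "nat \<Rightarrow> real \<Rightarrow> (nat \<Rightarrow> real) \<Rightarrow> bool" where
  "dec_chain d r z \<longleftrightarrow> z 1 \<le> r \<and> (\<forall>k. 1 \<le> k \<and> k < d \<longrightarrow> z (Suc k) \<le> z k) \<and> 0 \<le> z d"

lemma dec_chain_bounds:
  assumes "dec_chain d r z" and "1 \<le> k" and "k \<le> d"
  shows "0 \<le> z k" and "z k \<le> r"
proof -
  have antimono: "z b \<le> z a" if "1 \<le> a" "a \<le> b" "b \<le> d" for a b
    by (rule lift_Suc_antimono_le_ivl[of "{1..<d}" z a b]) (use assms(1) that in \<open>auto simp: dec_chain_def\<close>)
  show "0 \<le> z k"
    using antimono[of k d] assms by (simp add: dec_chain_def)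
  show "z k \<le> r"
    using antimono[of 1 k] assms by (simp add: dec_chain_def)
qed

lemma dec_chain_scale:
  assumes "0 < c"
  shows "dec_chain d (c * r) (\<lambda>k. c * z k) \<longleftrightarrow> dec_chain d r z"
  using assms by (simp add: dec_chain_def zero_le_mult_iff)

lemma dec_chain_vrestr:
  assumes "1 \<le> d"
  shows "dec_chain d r (vrestr d z) \<longleftrightarrow> dec_chain d r z"
  using assms by (simp add: dec_chain_def vrestr_def)

lemma Tmap_nonneg_iff:
  assumes "1 \<le> d"
  shows "(\<forall>j\<le>d. 0 \<le> Tmap d z j) \<longleftrightarrow> dec_chain d 1 z"
proof
  assume T: "\<forall>j\<le>d. 0 \<le> Tmap d z j"
  show "dec_chain d 1 z"
    unfolding dec_chain_def
  proof (intro conjI allI impI)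
    show "z 1 \<le> 1"
      using T[rule_format, of 0] assms by (simp add: Tmap_def zext_def)
    show "z (Suc k) \<le> z k" if "1 \<le> k \<and> k < d" for k
      using T[rule_format, of k] that by (simp add: Tmap_def zext_def)
    show "0 \<le> z d"
      using T[rule_format, of d] assms by (simp add: Tmap_def zext_def)
  qed
next
  assume "dec_chain d 1 z"
  then show "\<forall>j\<le>d. 0 \<le> Tmap d z j"
    using assms by (auto simp: dec_chain_def Tmap_def zext_def not_less_eq_eq)
qed

text \<open>\<open>Tmap\<close> maps the chain polytope onto the standard simplex, on which \<open>Pmat\<close>
  just permutes coordinates.\<close>
lemma dec_chain_Lmap_iff:
  assumes \<sigma>: "\<sigma> permutes {0..d}" and "1 \<le> d"
  shows "dec_chain d 1 (Lmap d \<sigma> x) \<longleftrightarrow> dec_chain d 1 x"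
proof -
  have reindex: "(\<forall>j\<le>d. P j) \<longleftrightarrow> (\<forall>k\<le>d. P (\<sigma> k))" for P
  proof -
    have "(\<forall>j\<le>d. P j) \<longleftrightarrow> (\<forall>j\<in>\<sigma> ` {0..d}. P j)"
      using permutes_image[OF \<sigma>] by auto
    then show ?thesis
      by auto
  qed
  have "(\<forall>j\<le>d. 0 \<le> Tmap d (Lmap d \<sigma> x) j) \<longleftrightarrow> (\<forall>k\<le>d. 0 \<le> Tmap d (Lmap d \<sigma> x) (\<sigma> k))"
    by (rule reindex)
  also have "\<dots> \<longleftrightarrow> (\<forall>k\<le>d. 0 \<le> Tmap d x k)"
    by (simp add: Tmap_Lmap[OF \<sigma>] Pmat_apply_perm[OF \<sigma>])
  finally show ?thesis
    using Tmap_nonneg_iff[OF assms(2)] by simp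
qed

lemma staircase_iff:
  "staircase n d stc \<longleftrightarrow> set stc \<subseteq> {..<n} \<and> (\<forall>i<n. count_list stc i = d i)"
proof -
  have "length stc = (\<Sum>i<n. d i)" if "set stc \<subseteq> {..<n}" and "\<forall>i<n. count_list stc i = d i"
    using sum_count_set[of stc "{..<n}"] that by simp
  then show ?thesis
    by (auto simp: staircase_def)
qed

lemma count_list_take_le: "count_list (take t xs) x \<le> count_list xs x"
  by (metis append_take_drop_id count_list_append le_add1)

lemma stair_pt_0: "stair_pt stc 0 = (\<lambda>_. 0)"
  by (simp add: stair_pt_def)

lemma stair_pt_Suc:
  assumes "t < length stc"
  shows "stair_pt stc (Suc t) = (stair_pt stc t)(stc ! t := Suc (stair_pt stc t (stc ! t)))"
  using assms by (auto simp: stair_pt_def take_Suc_conv_app_nth fun_eq_iff)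

lemma stair2_Suc:
  assumes "t < length stc"
  shows "stair2 stc (Suc t) = Suc (stair_pt stc t (stc ! t))"
  using assms by (simp add: stair2_def stair_pt_def take_Suc_conv_app_nth)

lemma stair2_append:
  assumes "1 \<le> t" and "t \<le> length xs"
  shows "stair2 (xs @ ys) t = stair2 xs t"
  using assms by (simp add: stair2_def nth_append)

lemma stair2_snoc_last: "stair2 (xs @ [i]) (Suc (length xs)) = Suc (count_list xs i)"
  by (simp add: stair2_def)

lemma stair2_last:
  assumes "xs \<noteq> []"
  shows "stair2 xs (length xs) = count_list xs (last xs)"
  using assms by (simp add: stair2_def last_conv_nth)

lemma staircase_step_bounds:
  assumes "staircase n d stc" and "1 \<le> t" and "t \<le> (\<Sum>i<n. d i)"
  shows "stc ! (t - 1) < n" and "1 \<le> stair2 stc t" and "stair2 stc t \<le> d (stc ! (t - 1))"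
proof -
  have t: "t - 1 < length stc"
    using assms by (simp add: staircase_def)
  then show i: "stc ! (t - 1) < n"
    using assms(1) nth_mem by (force simp: staircase_def)
  show "1 \<le> stair2 stc t"
    using stair2_Suc[OF t] assms(2) by simp
  show "stair2 stc t \<le> d (stc ! (t - 1))"
    using count_list_take_le[of t stc "stc ! (t - 1)"] assms(1) i by (simp add: stair2_def staircase_def)
qed

text \<open>The grid \<open>\<G>\<close>; coordinates outside \<open>{..<n}\<close> are fixed to \<open>0\<close>, as they are in the
  points \<open>stair_pt stc t\<close> of a staircase.\<close>
definition grid :: "nat \<Rightarrow> (nat \<Rightarrow> nat) \<Rightarrow> (nat \<Rightarrow> nat) set" where
  "grid n d = {j. (\<forall>i<n. j i \<le> d i) \<and> (\<forall>i\<ge>n. j i = 0)}"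

lemma grid_downward_closed: "j' \<in> grid n d \<Longrightarrow> j \<le> j' \<Longrightarrow> j \<in> grid n d"
  by (auto simp: grid_def le_fun_def intro: order_trans) (metis le_zero_eq)

lemma stair_pt_in_grid:
  assumes "staircase n d stc"
  shows "stair_pt stc t \<in> grid n d"
  unfolding grid_def stair_pt_def
proof (intro CollectI conjI allI impI)
  show "count_list (take t stc) i \<le> d i" if "i < n" for i
    using assms that count_list_take_le[of t stc i] by (simp add: staircase_def)
  show "count_list (take t stc) i = 0" if "n \<le> i" for i
    using assms that set_take_subset[of t stc] by (auto simp: staircase_def intro!: count_notin)
qed

lemma stair_pt_end:
  assumes "staircase n d stc"
  shows "stair_pt stc (\<Sum>i<n. d i) = (\<lambda>i. if i < n then d i else 0)"
proof
  fix i
  show "stair_pt stc (\<Sum>i<n. d i) i = (if i < n then d i else 0)"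
    using assms by (auto simp: staircase_def stair_pt_def intro!: count_notin)
qed

definition stair_form ::
  "nat \<Rightarrow> (nat \<Rightarrow> nat) \<Rightarrow> nat list \<Rightarrow> ((nat \<Rightarrow> nat) \<Rightarrow> real) \<Rightarrow> real \<Rightarrow> (nat \<Rightarrow> nat \<Rightarrow> real) \<Rightarrow> real"
  where
  "stair_form n d stc G r s' = G (stair_pt stc 0) * r +
     (\<Sum>t\<in>{1..(\<Sum>i<n. d i)}. (G (stair_pt stc t) - G (stair_pt stc (t - 1))) * s' (stc ! (t - 1)) (stair2 stc t))"

lemma stair_form_uminus: "stair_form n d stc (\<lambda>j. - G j) r s' = - stair_form n d stc G r s'"
  by (simp add: stair_form_def sum_negf[symmetric] algebra_simps)

lemma stair_form_diff:
  "stair_form n d stc (\<lambda>j. G j - c * H j) r s' = stair_form n d stc G r s' - c * stair_form n d stc H r s'"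
proof -
  let ?w = "\<lambda>t. s' (stc ! (t - 1)) (stair2 stc t)"
  let ?A = "{1..(\<Sum>i<n. d i)}"
  have "(\<Sum>t\<in>?A. ((G (stair_pt stc t) - c * H (stair_pt stc t)) -
                    (G (stair_pt stc (t - 1)) - c * H (stair_pt stc (t - 1)))) * ?w t) =
        (\<Sum>t\<in>?A. (G (stair_pt stc t) - G (stair_pt stc (t - 1))) * ?w t) -
          c * (\<Sum>t\<in>?A. (H (stair_pt stc t) - H (stair_pt stc (t - 1))) * ?w t)"
    unfolding sum_distrib_left sum_subtractf[symmetric] by (rule sum.cong) (simp_all add: algebra_simps)
  then show ?thesis
    unfolding stair_form_def by (simp add: algebra_simps)
qed

lemma stair_form_scale:
  assumes "staircase n d stc" and "\<forall>i<n. \<forall>k. 1 \<le> k \<and> k \<le> d i \<longrightarrow> s' i k = c * z i k"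
  shows "stair_form n d stc G c s' = c * stair_form n d stc G 1 z"
proof -
  have "s' (stc ! (t - 1)) (stair2 stc t) = c * z (stc ! (t - 1)) (stair2 stc t)"
    if "t \<in> {1..(\<Sum>i<n. d i)}" for t
    using assms staircase_step_bounds[OF assms(1)] that by simp
  then have "(\<Sum>t\<in>{1..(\<Sum>i<n. d i)}. (G (stair_pt stc t) - G (stair_pt stc (t - 1))) * s' (stc ! (t - 1)) (stair2 stc t)) =
      c * (\<Sum>t\<in>{1..(\<Sum>i<n. d i)}. (G (stair_pt stc t) - G (stair_pt stc (t - 1))) * z (stc ! (t - 1)) (stair2 stc t))"
    unfolding sum_distrib_left by (intro sum.cong) simp_all
  then show ?thesis
    unfolding stair_form_def by (simp add: algebra_simps)
qed

definition grid_submodular :: "nat \<Rightarrow> (nat \<Rightarrow> nat) \<Rightarrow> ((nat \<Rightarrow> nat) \<Rightarrow> real) \<Rightarrow> bool" where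
  "grid_submodular n d G \<longleftrightarrow> (\<forall>a\<in>grid n d. \<forall>b\<in>grid n d. G (sup a b) + G (inf a b) \<le> G a + G b)"

definition grid_indicator :: "(nat \<Rightarrow> nat) \<Rightarrow> nat \<Rightarrow> nat \<Rightarrow> real" where
  "grid_indicator J i k = (if 1 \<le> k \<and> k \<le> J i then 1 else 0)"

lemma grid_submodular_step:
  assumes sub: "grid_submodular n d G" and a: "a \<in> grid n d" and J: "J \<in> grid n d"
    and b: "b = a(i := Suc (a i))"
  shows "(G b - G a) * (if Suc (a i) \<le> J i then 1 else 0) \<le> G (inf b J) - G (inf a J)"
proof (cases "Suc (a i) \<le> J i")
  case True
  have "sup (inf b J) a = b" and "inf (inf b J) a = inf a J"
    using True b by (auto simp: fun_eq_iff inf_fun_def sup_fun_def sup_max inf_min)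
  moreover have "inf b J \<in> grid n d"
    using grid_downward_closed[OF J] by simp
  ultimately show ?thesis
    using sub a True unfolding grid_submodular_def by fastforce
next
  case False
  then have "inf b J = inf a J"
    using b by (auto simp: fun_eq_iff inf_fun_def inf_min)
  then show ?thesis
    using False by simp
qed

text \<open>Along a staircase, the partial sums of the form stay below \<open>G\<close> at the meet of the
  current point with \<open>J\<close>; at the end of the staircase that meet is \<open>J\<close>.\<close>
lemma stair_form_grid_indicator_le:
  assumes st: "staircase n d stc" and sub: "grid_submodular n d G" and J: "J \<in> grid n d"
  shows "stair_form n d stc G 1 (grid_indicator J) \<le> G J"
proof -
  define N where "N = (\<Sum>i<n. d i)"
  let ?w = "\<lambda>t. grid_indicator J (stc ! (t - 1)) (stair2 stc t)"
  have partial: "G (stair_pt stc 0) + (\<Sum>t\<in>{1..T}. (G (stair_pt stc t) - G (stair_pt stc (t - 1))) * ?w t)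
      \<le> G (inf (stair_pt stc T) J)" if "T \<le> N" for T
    using that
  proof (induction T)
    case 0
    have "inf (\<lambda>_. 0) J = (\<lambda>_. 0 :: nat)"
      by (simp add: fun_eq_iff inf_fun_def inf_min)
    then show ?case
      by (simp add: stair_pt_0)
  next
    case (Suc T)
    have T: "T < length stc"
      using Suc.prems st by (simp add: staircase_def N_def)
    have "?w (Suc T) = (if Suc (stair_pt stc T (stc ! T)) \<le> J (stc ! T) then 1 else 0)"
      using stair2_Suc[OF T] by (simp add: grid_indicator_def)
    then have "(G (stair_pt stc (Suc T)) - G (stair_pt stc T)) * ?w (Suc T)
        \<le> G (inf (stair_pt stc (Suc T)) J) - G (inf (stair_pt stc T) J)"
      using grid_submodular_step[OF sub stair_pt_in_grid[OF st] J stair_pt_Suc[OF T]] by simp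
    moreover have "G (stair_pt stc 0) + (\<Sum>t\<in>{1..Suc T}. (G (stair_pt stc t) - G (stair_pt stc (t - 1))) * ?w t) =
        G (stair_pt stc 0) + (\<Sum>t\<in>{1..T}. (G (stair_pt stc t) - G (stair_pt stc (t - 1))) * ?w t) +
        (G (stair_pt stc (Suc T)) - G (stair_pt stc T)) * ?w (Suc T)"
      by simp
    ultimately show ?case
      using Suc.IH Suc.prems by linarith
  qed
  have "inf (stair_pt stc N) J = J"
    using J stair_pt_end[OF st] by (auto simp: N_def fun_eq_iff inf_fun_def inf_min grid_def)
  then show ?thesis
    using partial[of N] by (simp add: stair_form_def N_def)
qed

lemma summation_by_parts_nonneg:
  fixes h a :: "nat \<Rightarrow> real"
  assumes a_antimono: "\<forall>t<M. a (Suc t) \<le> a t" and a_last: "0 \<le> a M" and h: "\<forall>t\<le>M. 0 \<le> h t"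
  shows "0 \<le> h 0 * a 0 + (\<Sum>t\<in>{1..M}. (h t - h (t - 1)) * a t)"
proof -
  have partial: "h T * a T \<le> h 0 * a 0 + (\<Sum>t\<in>{1..T}. (h t - h (t - 1)) * a t)" if "T \<le> M" for T
    using that
  proof (induction T)
    case (Suc T)
    have "0 \<le> h T * (a T - a (Suc T))"
      using Suc.prems a_antimono h by simp
    then show ?case
      using Suc by (simp add: algebra_simps)
  qed simp
  show ?thesis
    using partial[of M] h a_last by (meson order_trans mult_nonneg_nonneg order_refl)
qed

definition stair_sorted :: "(nat \<Rightarrow> nat \<Rightarrow> real) \<Rightarrow> nat list \<Rightarrow> bool" where
  "stair_sorted z stc \<longleftrightarrow>
     (\<forall>t. 1 \<le> t \<and> t < length stc \<longrightarrow> z (stc ! t) (stair2 stc (Suc t)) \<le> z (stc ! (t - 1)) (stair2 stc t))"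

lemma stair_form_nonneg:
  assumes st: "staircase n d stc" and sorted: "stair_sorted z stc"
    and G: "\<forall>j\<in>grid n d. 0 \<le> G j"
    and z: "\<forall>i<n. \<forall>k. 1 \<le> k \<and> k \<le> d i \<longrightarrow> 0 \<le> z i k \<and> z i k \<le> 1"
  shows "0 \<le> stair_form n d stc G 1 z"
proof -
  define N where "N = (\<Sum>i<n. d i)"
  define a where "a t = (if t = 0 then 1 else z (stc ! (t - 1)) (stair2 stc t))" for t
  have len: "length stc = N"
    using st by (simp add: staircase_def N_def)
  have a_bounds: "0 \<le> a t \<and> a t \<le> 1" if "t \<le> N" for t
    using z staircase_step_bounds[OF st, of t] that by (simp add: a_def N_def)
  have "0 \<le> G (stair_pt stc 0) * a 0 + (\<Sum>t\<in>{1..N}. (G (stair_pt stc t) - G (stair_pt stc (t - 1))) * a t)"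
  proof (rule summation_by_parts_nonneg)
    show "\<forall>t<N. a (Suc t) \<le> a t"
    proof (intro allI impI)
      fix t
      assume "t < N"
      then show "a (Suc t) \<le> a t"
        using sorted a_bounds[of "Suc t"] len by (cases t) (auto simp: stair_sorted_def a_def)
    qed
  qed (use a_bounds G stair_pt_in_grid[OF st] in auto)
  then show ?thesis
    by (simp add: stair_form_def a_def N_def)
qed

lemma stair_sorted_snoc:
  assumes "stair_sorted z xs"
    and "xs \<noteq> [] \<Longrightarrow> z i (Suc (count_list xs i)) \<le> z (last xs) (count_list xs (last xs))"
  shows "stair_sorted z (xs @ [i])"
  unfolding stair_sorted_def
proof (intro allI impI)
  fix t
  assume t: "1 \<le> t \<and> t < length (xs @ [i])"
  show "z ((xs @ [i]) ! t) (stair2 (xs @ [i]) (Suc t)) \<le> z ((xs @ [i]) ! (t - 1)) (stair2 (xs @ [i]) t)"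
  proof (cases "t < length xs")
    case True
    then show ?thesis
      using assms(1) t by (auto simp: stair_sorted_def stair2_append nth_append)
  next
    case False
    then have "t = length xs" and "xs \<noteq> []"
      using t by auto
    then show ?thesis
      using assms(2) t stair2_snoc_last stair2_append[of t xs "[i]"] stair2_last[of xs]
      by (simp add: nth_append last_conv_nth)
  qed
qed

lemma staircase_snoc:
  assumes "staircase n (d(i := d i - 1)) stc" and "i < n" and "1 \<le> d i"
  shows "staircase n d (stc @ [i])"
  using assms by (auto simp: staircase_iff)

lemma staircase_last:
  assumes "staircase n d stc" and "stc \<noteq> []"
  shows "last stc < n" and "count_list stc (last stc) = d (last stc)" and "1 \<le> d (last stc)"
proof -
  have "last stc \<in> set stc"
    using assms(2) by simp
  then show "last stc < n" and "count_list stc (last stc) = d (last stc)" and "1 \<le> d (last stc)"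
    using assms(1) count_list_0_iff[of stc "last stc"] by (auto simp: staircase_iff)
qed

text \<open>Greedy construction from the top: the last step of the staircase goes to a coordinate
  whose topmost value is smallest.\<close>
lemma stair_sorted_exists:
  assumes "\<forall>i<n. \<forall>k. 1 \<le> k \<and> k < d i \<longrightarrow> z i (Suc k) \<le> z i k"
  shows "\<exists>stc. staircase n d stc \<and> stair_sorted z stc"
  using assms
proof (induction "\<Sum>i<n. d i" arbitrary: d rule: less_induct)
  case less
  show ?case
  proof (cases "\<forall>i<n. d i = 0")
    case True
    then have "staircase n d []"
      by (simp add: staircase_iff)
    then show ?thesis
      by (auto simp: stair_sorted_def)
  next
    case False
    define I where "I = {i. i < n \<and> 1 \<le> d i}"
    have "finite I" and "I \<noteq> {}"
      using False by (auto simp: I_def)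
    then obtain i0 where i0: "i0 \<in> I" and i0_min: "\<forall>i\<in>I. z i0 (d i0) \<le> z i (d i)"
      using arg_min_if_finite[of I "\<lambda>i. z i (d i)"] by (metis not_less)
    have i0n: "i0 < n" and di0: "1 \<le> d i0"
      using i0 by (auto simp: I_def)
    define d' where "d' = d(i0 := d i0 - 1)"
    have "(\<Sum>i<n. d' i) < (\<Sum>i<n. d i)"
      using i0n di0 by (intro sum_strict_mono_ex1) (auto simp: d'_def)
    moreover have "\<forall>i<n. \<forall>k. 1 \<le> k \<and> k < d' i \<longrightarrow> z i (Suc k) \<le> z i k"
      using less.prems by (auto simp: d'_def)
    ultimately obtain stc where st: "staircase n d' stc" and sorted: "stair_sorted z stc"
      using less.hyps by blast
    have "staircase n d (stc @ [i0])"
      using staircase_snoc[of n d i0 stc] st i0n di0 by (simp add: d'_def)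
    moreover have "stair_sorted z (stc @ [i0])"
    proof (rule stair_sorted_snoc[OF sorted])
      assume "stc \<noteq> []"
      note last = staircase_last[OF st this]
      have "z i0 (d i0) \<le> z (last stc) (d' (last stc))"
      proof (cases "last stc = i0")
        case True
        obtain k where "d i0 = Suc k"
          using di0 by (cases "d i0") auto
        then show ?thesis
          using less.prems i0n last(3) True by (simp add: d'_def)
      next
        case False
        then show ?thesis
          using i0_min last by (simp add: I_def d'_def)
      qed
      then show "z i0 (Suc (count_list stc i0)) \<le> z (last stc) (count_list stc (last stc))"
        using st i0n di0 last(2) by (simp add: staircase_iff d'_def)
    qed
    ultimately show ?thesis
      by blast
  qed
qed

lemma grid_submodular_compose:
  assumes sub: "submodular_on n B \<phi>"
    and mono: "\<forall>i<n. \<forall>k<d i. F i k \<le> F i (Suc k)"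
    and range: "\<forall>i<n. \<forall>k\<le>d i. F i k \<in> B i"
  shows "grid_submodular n d (\<lambda>j. \<phi> (\<lambda>i\<in>{..<n}. F i (j i)))"
  unfolding grid_submodular_def
proof (intro ballI)
  fix a b
  assume a: "a \<in> grid n d" and b: "b \<in> grid n d"
  have F_mono: "F i k \<le> F i l" if "i < n" "k \<le> l" "l \<le> d i" for i k l
    by (rule lift_Suc_mono_le_ivl[of "{..<d i}"]) (use mono that in auto)
  have "F i (max (a i) (b i)) = max (F i (a i)) (F i (b i))"
    and "F i (min (a i) (b i)) = min (F i (a i)) (F i (b i))" if "i < n" for i
    using F_mono[OF that, of "a i" "b i"] F_mono[OF that, of "b i" "a i"] a b that
    by (auto simp: grid_def max_def min_def)
  then have "(\<lambda>i\<in>{..<n}. F i (sup a b i)) = sup (\<lambda>i\<in>{..<n}. F i (a i)) (\<lambda>i\<in>{..<n}. F i (b i))"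
    and "(\<lambda>i\<in>{..<n}. F i (inf a b i)) = inf (\<lambda>i\<in>{..<n}. F i (a i)) (\<lambda>i\<in>{..<n}. F i (b i))"
    by (auto simp: fun_eq_iff sup_max inf_min)
  moreover have "(\<lambda>i\<in>{..<n}. F i (a i)) \<in> Pi\<^sub>E {..<n} B" and "(\<lambda>i\<in>{..<n}. F i (b i)) \<in> Pi\<^sub>E {..<n} B"
    using range a b by (auto simp: grid_def)
  ultimately show "\<phi> (\<lambda>i\<in>{..<n}. F i (sup a b i)) + \<phi> (\<lambda>i\<in>{..<n}. F i (inf a b i))
      \<le> \<phi> (\<lambda>i\<in>{..<n}. F i (a i)) + \<phi> (\<lambda>i\<in>{..<n}. F i (b i))"
    using sub by (simp add: submodular_on_def)
qed

lemma submodular_on_uminus_iff: "submodular_on n B (\<lambda>x. - F x) \<longleftrightarrow> supermodular_on n B F"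
proof -
  have "- a - b \<le> - c - e \<longleftrightarrow> c + e \<le> a + b" for a b c e :: real
    by linarith
  then show ?thesis
    by (simp add: submodular_on_def supermodular_on_def)
qed

lemma LP_feasible_mu_iff:
  "\<mu> \<in> LP_feasible_mu n d \<sigma> \<psi> \<theta> \<longleftrightarrow>
    (\<exists>\<rho> s s'.
      (\<forall>stc. staircase n d stc \<longrightarrow> stair_form n d stc \<psi> \<rho> s' \<le> \<mu> \<and> 1 \<le> stair_form n d stc \<theta> \<rho> s') \<and>
      (\<forall>i<n. dec_chain (d i) \<rho> (s i)) \<and>
      (\<forall>i<n. \<forall>k. 1 \<le> k \<and> k \<le> d i \<longrightarrow>
         s' i k = Amul (d i) (\<sigma> i) (vrestr (d i) (s i)) k + cvec (d i) (\<sigma> i) k * \<rho>))"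
  by (simp add: LP_feasible_mu_def stair_form_def dec_chain_def)

lemma vrestr_Rvec: "z \<in> Rvec d \<Longrightarrow> vrestr d z = z"
  by (auto simp: vrestr_def Rvec_def fun_eq_iff not_less_eq_eq)

lemma scaled_Lmap_chain:
  assumes \<sigma>: "\<sigma> permutes {0..d}" and d: "1 \<le> d" and \<rho>: "0 < \<rho>"
    and w: "w \<in> Rvec d" and w_chain: "dec_chain d 1 w"
  shows "dec_chain d \<rho> (\<lambda>k. \<rho> * Lmap d \<sigma> w k)"
    and "Amul d \<sigma> (vrestr d (\<lambda>k. \<rho> * Lmap d \<sigma> w k)) k + cvec d \<sigma> k * \<rho> = \<rho> * w k"
proof -
  show "dec_chain d \<rho> (\<lambda>k. \<rho> * Lmap d \<sigma> w k)"
    using dec_chain_scale[OF \<rho>, of d 1] dec_chain_Lmap_iff[OF \<sigma> d] w_chain by simp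
  have "(\<lambda>k. \<rho> * Lmap d \<sigma> w k) \<in> Rvec d"
    using Lmap_in_Rvec[of d \<sigma> w] by (simp add: Rvec_def)
  then show "Amul d \<sigma> (vrestr d (\<lambda>k. \<rho> * Lmap d \<sigma> w k)) k + cvec d \<sigma> k * \<rho> = \<rho> * w k"
    using Amul_scale_add_cvec[OF \<sigma> Lmap_in_Rvec] Linv_Lmap[OF \<sigma> w] by (simp add: vrestr_Rvec)
qed

lemma scaled_Linv_chain:
  assumes \<sigma>: "\<sigma> permutes {0..d}" and d: "1 \<le> d" and \<rho>: "0 < \<rho>" and s_chain: "dec_chain d \<rho> s"
  defines "z \<equiv> Linv d \<sigma> (\<lambda>k. vrestr d s k / \<rho>)"
  shows "dec_chain d 1 z" and "Amul d \<sigma> (vrestr d s) k + cvec d \<sigma> k * \<rho> = \<rho> * z k"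
proof -
  have zR: "(\<lambda>k. vrestr d s k / \<rho>) \<in> Rvec d"
    by (simp add: Rvec_def vrestr_def)
  have "dec_chain d 1 (\<lambda>k. vrestr d s k / \<rho>)"
    using dec_chain_scale[of "1 / \<rho>" d \<rho> "vrestr d s"] dec_chain_vrestr[OF d] s_chain \<rho> by simp
  then show "dec_chain d 1 z"
    using Lmap_Linv[OF \<sigma> zR] dec_chain_Lmap_iff[OF \<sigma> d, of z] by (simp add: z_def)
  have "vrestr d s = (\<lambda>k. \<rho> * (vrestr d s k / \<rho>))"
    using \<rho> by simp
  then show "Amul d \<sigma> (vrestr d s) k + cvec d \<sigma> k * \<rho> = \<rho> * z k"
    using Amul_scale_add_cvec[OF \<sigma> zR, of \<rho> k] by (simp add: z_def)
qed

lemma LP_feasible_at_grid_point: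
  assumes d: "\<forall>i<n. 1 \<le> d i" and perm: "\<forall>i<n. \<sigma> i permutes {0..d i}"
    and sub: "grid_submodular n d \<psi>" and super: "grid_submodular n d (\<lambda>j. - \<theta> j)"
    and J: "J \<in> grid n d" and pos: "0 < \<theta> J"
  shows "\<psi> J / \<theta> J \<in> LP_feasible_mu n d \<sigma> \<psi> \<theta>"
proof -
  define \<rho> where "\<rho> = 1 / \<theta> J"
  define w where "w = grid_indicator J"
  define s where "s i = (\<lambda>k. \<rho> * Lmap (d i) (\<sigma> i) (w i) k)" for i
  define s' where "s' i k = \<rho> * w i k" for i k
  have \<rho>: "0 < \<rho>"
    using pos by (simp add: \<rho>_def)
  have objective: "stair_form n d stc \<psi> \<rho> s' \<le> \<psi> J / \<theta> J"
    and normalization: "1 \<le> stair_form n d stc \<theta> \<rho> s'" if st: "staircase n d stc" for stc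
  proof -
    have scale: "stair_form n d stc G \<rho> s' = \<rho> * stair_form n d stc G 1 w" for G
      by (rule stair_form_scale[OF st]) (simp add: s'_def)
    have "stair_form n d stc \<psi> 1 w \<le> \<psi> J"
      unfolding w_def by (rule stair_form_grid_indicator_le[OF st sub J])
    then have "\<rho> * stair_form n d stc \<psi> 1 w \<le> \<rho> * \<psi> J"
      using \<rho> by simp
    then show "stair_form n d stc \<psi> \<rho> s' \<le> \<psi> J / \<theta> J"
      unfolding scale by (simp add: \<rho>_def)
    have "stair_form n d stc (\<lambda>j. - \<theta> j) 1 w \<le> - \<theta> J"
      unfolding w_def by (rule stair_form_grid_indicator_le[OF st super J])
    then have "\<rho> * \<theta> J \<le> \<rho> * stair_form n d stc \<theta> 1 w"
      using \<rho> by (simp add: stair_form_uminus)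
    then show "1 \<le> stair_form n d stc \<theta> \<rho> s'"
      unfolding scale using pos by (simp add: \<rho>_def)
  qed
  have "w i \<in> Rvec (d i)" and "dec_chain (d i) 1 (w i)" if "i < n" for i
    using J that by (auto simp: w_def grid_indicator_def grid_def Rvec_def dec_chain_def)
  then have "dec_chain (d i) \<rho> (s i)"
    and "s' i k = Amul (d i) (\<sigma> i) (vrestr (d i) (s i)) k + cvec (d i) (\<sigma> i) k * \<rho>" if "i < n" for i k
    using scaled_Lmap_chain[OF _ _ \<rho>] perm d that by (simp_all add: s_def s'_def)
  then show ?thesis
    unfolding LP_feasible_mu_iff using objective normalization by blast
qed

text \<open>\<open>\<theta>_nonneg\<close> only matters for the empty staircase; otherwise \<open>\<rho> \<le> 0\<close> already
  forces \<open>\<rho> = 0\<close> and \<open>s' = 0\<close>.\<close>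
lemma LP_scale_pos:
  assumes \<theta>_nonneg: "\<forall>j\<in>grid n d. 0 \<le> \<theta> j"
    and st: "staircase n d stc" and normalized: "1 \<le> stair_form n d stc \<theta> \<rho> s'"
    and chain: "\<forall>i<n. dec_chain (d i) \<rho> (s i)"
    and affine: "\<forall>i<n. \<forall>k. 1 \<le> k \<and> k \<le> d i \<longrightarrow>
       s' i k = Amul (d i) (\<sigma> i) (vrestr (d i) (s i)) k + cvec (d i) (\<sigma> i) k * \<rho>"
  shows "0 < \<rho>"
proof (rule ccontr)
  assume "\<not> 0 < \<rho>"
  have degenerate: "\<rho> = 0 \<and> s' i k = 0" if "i < n" "1 \<le> k" "k \<le> d i" for i k
  proof -
    note bounds = dec_chain_bounds[OF chain[rule_format, OF that(1)]]
    have "\<rho> = 0"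
      using bounds[OF that(2,3)] \<open>\<not> 0 < \<rho>\<close> by linarith
    moreover have "vrestr (d i) (s i) = (\<lambda>_. 0)"
    proof
      fix k'
      show "vrestr (d i) (s i) k' = 0"
        using bounds[of k'] \<open>\<rho> = 0\<close> by (auto simp: vrestr_def)
    qed
    ultimately show ?thesis
      using affine that by (simp add: Amul_def cvec_def)
  qed
  have "stair_form n d stc \<theta> \<rho> s' = \<theta> (stair_pt stc 0) * \<rho>"
    unfolding stair_form_def using degenerate staircase_step_bounds[OF st] by simp
  also have "\<dots> \<le> 0"
    using \<theta>_nonneg stair_pt_in_grid[OF st] \<open>\<not> 0 < \<rho>\<close> by (simp add: mult_nonneg_nonpos)
  finally show False
    using normalized by simp
qed

lemma LP_lower_bound:
  assumes d: "\<forall>i<n. 1 \<le> d i" and perm: "\<forall>i<n. \<sigma> i permutes {0..d i}"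
    and m: "0 \<le> m" and below: "\<forall>j\<in>grid n d. m * \<theta> j \<le> \<psi> j"
    and \<theta>_nonneg: "\<forall>j\<in>grid n d. 0 \<le> \<theta> j"
    and \<mu>: "\<mu> \<in> LP_feasible_mu n d \<sigma> \<psi> \<theta>"
  shows "m \<le> \<mu>"
proof -
  obtain \<rho> s s' where
    constraints: "\<And>stc. staircase n d stc \<Longrightarrow> stair_form n d stc \<psi> \<rho> s' \<le> \<mu> \<and> 1 \<le> stair_form n d stc \<theta> \<rho> s'"
    and chain: "\<forall>i<n. dec_chain (d i) \<rho> (s i)"
    and affine: "\<forall>i<n. \<forall>k. 1 \<le> k \<and> k \<le> d i \<longrightarrow>
       s' i k = Amul (d i) (\<sigma> i) (vrestr (d i) (s i)) k + cvec (d i) (\<sigma> i) k * \<rho>"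
    using \<mu> unfolding LP_feasible_mu_iff by blast
  obtain stc0 where "staircase n d stc0"
    using stair_sorted_exists[of n d "\<lambda>_ _. 0"] by auto
  then have \<rho>: "0 < \<rho>"
    using LP_scale_pos[OF \<theta>_nonneg _ _ chain affine] constraints by blast
  define z where "z i = Linv (d i) (\<sigma> i) (\<lambda>k. vrestr (d i) (s i) k / \<rho>)" for i
  have z_chain: "\<forall>i<n. dec_chain (d i) 1 (z i)"
    and s'_z: "\<forall>i<n. \<forall>k. 1 \<le> k \<and> k \<le> d i \<longrightarrow> s' i k = \<rho> * z i k"
    using scaled_Linv_chain[OF _ _ \<rho>] perm d chain affine by (simp_all add: z_def)
  obtain stc where st: "staircase n d stc" and sorted: "stair_sorted z stc"
    using stair_sorted_exists[of n d z] z_chain by (auto simp: dec_chain_def)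
  have "0 \<le> stair_form n d stc (\<lambda>j. \<psi> j - m * \<theta> j) 1 z"
  proof (rule stair_form_nonneg[OF st sorted])
    show "\<forall>j\<in>grid n d. 0 \<le> \<psi> j - m * \<theta> j"
      using below by simp
    show "\<forall>i<n. \<forall>k. 1 \<le> k \<and> k \<le> d i \<longrightarrow> 0 \<le> z i k \<and> z i k \<le> 1"
      using dec_chain_bounds[of "d i" 1 "z i" for i] z_chain by blast
  qed
  then have mean: "m * stair_form n d stc \<theta> 1 z \<le> stair_form n d stc \<psi> 1 z"
    by (simp add: stair_form_diff)
  have normalized: "1 \<le> \<rho> * stair_form n d stc \<theta> 1 z" and objective: "\<rho> * stair_form n d stc \<psi> 1 z \<le> \<mu>"
    using constraints[OF st] stair_form_scale[OF st s'_z] by simp_all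
  have "m \<le> m * (\<rho> * stair_form n d stc \<theta> 1 z)"
    using mult_left_mono[OF normalized m] by simp
  also have "\<dots> = \<rho> * (m * stair_form n d stc \<theta> 1 z)"
    by (simp add: ac_simps)
  also have "\<dots> \<le> \<rho> * stair_form n d stc \<psi> 1 z"
    using mean \<rho> by simp
  also have "\<dots> \<le> \<mu>"
    by (rule objective)
  finally show "m \<le> \<mu>" .
qed

lemma LP_optimal_value:
  assumes d: "\<forall>i<n. 1 \<le> d i" and perm: "\<forall>i<n. \<sigma> i permutes {0..d i}"
    and sub: "grid_submodular n d \<psi>" and super: "grid_submodular n d (\<lambda>j. - \<theta> j)"
    and \<psi>_nonneg: "\<forall>j\<in>grid n d. 0 \<le> \<psi> j" and \<theta>_pos: "\<forall>j\<in>grid n d. 0 < \<theta> j"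
    and J: "J \<in> grid n d" and J_min: "\<forall>j\<in>grid n d. \<psi> J / \<theta> J \<le> \<psi> j / \<theta> j"
  shows "\<psi> J / \<theta> J \<in> LP_feasible_mu n d \<sigma> \<psi> \<theta> \<and> (\<forall>\<mu>\<in>LP_feasible_mu n d \<sigma> \<psi> \<theta>. \<psi> J / \<theta> J \<le> \<mu>)"
proof
  show "\<psi> J / \<theta> J \<in> LP_feasible_mu n d \<sigma> \<psi> \<theta>"
    using LP_feasible_at_grid_point[OF d perm sub super J] \<theta>_pos J by simp
  have "\<forall>j\<in>grid n d. \<psi> J / \<theta> J * \<theta> j \<le> \<psi> j"
    using J_min \<theta>_pos by (simp add: pos_le_divide_eq)
  moreover have "0 \<le> \<psi> J / \<theta> J"
    using divide_nonneg_pos[of "\<psi> J" "\<theta> J"] \<psi>_nonneg \<theta>_pos J by blast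
  ultimately show "\<forall>\<mu>\<in>LP_feasible_mu n d \<sigma> \<psi> \<theta>. \<psi> J / \<theta> J \<le> \<mu>"
    using LP_lower_bound[OF d perm] \<theta>_pos by (simp add: less_imp_le)
qed

lemma PiE_eq_image_grid:
  assumes perm: "\<forall>i<n. \<sigma> i permutes {0..d i}"
  shows "Pi\<^sub>E {..<n} (\<lambda>i. p i ` {0..d i}) = (\<lambda>j. \<lambda>i\<in>{..<n}. p i (\<sigma> i (j i))) ` grid n d"
proof
  show "(\<lambda>j. \<lambda>i\<in>{..<n}. p i (\<sigma> i (j i))) ` grid n d \<subseteq> Pi\<^sub>E {..<n} (\<lambda>i. p i ` {0..d i})"
  proof clarify
    fix j
    assume j: "j \<in> grid n d"
    have "\<sigma> i (j i) \<in> {0..d i}" if "i < n" for i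
      using permutes_in_image[OF perm[rule_format, OF that], of "j i"] j that by (simp add: grid_def)
    then show "(\<lambda>i\<in>{..<n}. p i (\<sigma> i (j i))) \<in> Pi\<^sub>E {..<n} (\<lambda>i. p i ` {0..d i})"
      by (simp add: restrict_PiE_iff)
  qed
  show "Pi\<^sub>E {..<n} (\<lambda>i. p i ` {0..d i}) \<subseteq> (\<lambda>j. \<lambda>i\<in>{..<n}. p i (\<sigma> i (j i))) ` grid n d"
  proof
    fix x
    assume x: "x \<in> Pi\<^sub>E {..<n} (\<lambda>i. p i ` {0..d i})"
    then have "\<forall>i<n. \<exists>k. k \<le> d i \<and> x i = p i k"
      by (fastforce simp: PiE_iff)
    then obtain a where a: "\<forall>i<n. a i \<le> d i \<and> x i = p i (a i)"
      by metis
    define j where "j i = (if i < n then inv (\<sigma> i) (a i) else 0)" for i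
    have "j i \<le> d i" if "i < n" for i
      using permutes_in_image[OF permutes_inv[OF perm[rule_format, OF that]], of "a i"] a that
      by (simp add: j_def)
    then have "j \<in> grid n d"
      by (simp add: grid_def j_def)
    moreover have "x i = (\<lambda>i\<in>{..<n}. p i (\<sigma> i (j i))) i" for i
    proof (cases "i < n")
      case True
      then show ?thesis
        using a permutes_inverses(1)[OF perm[rule_format, OF True]] by (simp add: j_def)
    next
      case False
      then show ?thesis
        using x by (simp add: PiE_def extensional_def)
    qed
    ultimately show "x \<in> (\<lambda>j. \<lambda>i\<in>{..<n}. p i (\<sigma> i (j i))) ` grid n d"
      by (metis (no_types, lifting) ext image_eqI)
  qed
qed

lemma obtain_Min_image:
  fixes F :: "'a \<Rightarrow> 'b::linorder"
  assumes "finite (F ` A)" and "A \<noteq> {}"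
  obtains a where "a \<in> A" and "Min (F ` A) = F a" and "\<forall>b\<in>A. F a \<le> F b"
proof -
  have "Min (F ` A) \<in> F ` A"
    using assms by (intro Min_in) auto
  then obtain a where "a \<in> A" and "Min (F ` A) = F a"
    by blast
  moreover have "\<forall>b\<in>A. Min (F ` A) \<le> F b"
    using Min_le[OF assms(1)] by blast
  ultimately show thesis
    using that by simp
qed

theorem theorem4:
  fixes n :: nat and d :: "nat \<Rightarrow> nat" and p :: "nat \<Rightarrow> nat \<Rightarrow> real"
    and f g :: "nat \<Rightarrow> real \<Rightarrow> real" and L U L' U' :: "nat \<Rightarrow> real"
    and \<phi> varphi :: "(nat \<Rightarrow> real) \<Rightarrow> real" and \<sigma> :: "nat \<Rightarrow> nat \<Rightarrow> nat"
  assumes n: "n \<ge> 1"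
    and d: "\<forall>i<n. d i \<ge> 1"
    and p_mono: "\<forall>i<n. \<forall>j<d i. p i j < p i (Suc j)"
    and f_range: "\<forall>i<n. \<forall>j\<le>d i. f i (p i j) \<in> {L i..U i}"
    and g_range: "\<forall>i<n. \<forall>j\<le>d i. g i (p i j) \<in> {L' i..U' i}"
    and sub: "submodular_on n (\<lambda>i. {L i..U i}) \<phi>"
    and super: "supermodular_on n (\<lambda>i. {L' i..U' i}) varphi"
    and nonneg: "\<forall>x\<in>Pi\<^sub>E {..<n} (\<lambda>i. p i ` {0..d i}). \<phi> (\<lambda>i\<in>{..<n}. f i (x i)) \<ge> 0"
    and pos: "\<forall>x\<in>Pi\<^sub>E {..<n} (\<lambda>i. p i ` {0..d i}). varphi (\<lambda>i\<in>{..<n}. g i (x i)) > 0"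
    and perm: "\<forall>i<n. \<sigma> i permutes {0..d i}"
    and f_sorted: "\<forall>i<n. \<forall>j<d i. f i (p i (\<sigma> i j)) \<le> f i (p i (\<sigma> i (Suc j)))"
    and g_sorted: "\<forall>i<n. \<forall>j<d i. g i (p i (\<sigma> i j)) \<le> g i (p i (\<sigma> i (Suc j)))"
  shows "let X = Pi\<^sub>E {..<n} (\<lambda>i. p i ` {0..d i});
             m = Min ((\<lambda>x. \<phi> (\<lambda>i\<in>{..<n}. f i (x i)) / varphi (\<lambda>i\<in>{..<n}. g i (x i))) ` X);
             \<psi> = (\<lambda>j. \<phi> (\<lambda>i\<in>{..<n}. f i (p i (\<sigma> i (j i)))));
             \<theta> = (\<lambda>j. varphi (\<lambda>i\<in>{..<n}. g i (p i (\<sigma> i (j i)))));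
             S = LP_feasible_mu n d \<sigma> \<psi> \<theta>
         in m \<in> S \<and> (\<forall>\<mu>\<in>S. m \<le> \<mu>)"
proof -
  define X where "X = Pi\<^sub>E {..<n} (\<lambda>i. p i ` {0..d i})"
  define R where "R = (\<lambda>x. \<phi> (\<lambda>i\<in>{..<n}. f i (x i)) / varphi (\<lambda>i\<in>{..<n}. g i (x i)))"
  define \<psi> where "\<psi> = (\<lambda>j. \<phi> (\<lambda>i\<in>{..<n}. f i (p i (\<sigma> i (j i)))))"
  define \<theta> where "\<theta> = (\<lambda>j. varphi (\<lambda>i\<in>{..<n}. g i (p i (\<sigma> i (j i)))))"
  define h where "h j = (\<lambda>i\<in>{..<n}. p i (\<sigma> i (j i)))" for j
  have X: "X = h ` grid n d"
    unfolding X_def h_def by (rule PiE_eq_image_grid[OF perm])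
  have h_\<psi>: "\<phi> (\<lambda>i\<in>{..<n}. f i (h j i)) = \<psi> j" and h_\<theta>: "varphi (\<lambda>i\<in>{..<n}. g i (h j i)) = \<theta> j" for j
    by (simp_all add: h_def \<psi>_def \<theta>_def cong: restrict_cong)
  have \<psi>_nonneg: "\<forall>j\<in>grid n d. 0 \<le> \<psi> j" and \<theta>_pos: "\<forall>j\<in>grid n d. 0 < \<theta> j"
    using nonneg pos unfolding X_def[symmetric] X by (simp_all add: h_\<psi> h_\<theta>)
  have RX: "R ` X = (\<lambda>j. \<psi> j / \<theta> j) ` grid n d"
    unfolding X image_image R_def h_\<psi> h_\<theta> ..
  moreover have "finite (R ` X)" and "(\<lambda>_. 0) \<in> grid n d"
    by (simp_all add: X_def finite_PiE grid_def)
  ultimately obtain J where J: "J \<in> grid n d" and m: "Min (R ` X) = \<psi> J / \<theta> J"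
    and J_min: "\<forall>j\<in>grid n d. \<psi> J / \<theta> J \<le> \<psi> j / \<theta> j"
    using obtain_Min_image[of "\<lambda>j. \<psi> j / \<theta> j" "grid n d"] by auto
  have "\<forall>i<n. \<forall>k\<le>d i. \<sigma> i k \<le> d i"
    using perm permutes_in_image by fastforce
  then have "grid_submodular n d \<psi>" and "grid_submodular n d (\<lambda>j. - \<theta> j)"
    using grid_submodular_compose[OF sub f_sorted] f_range
      grid_submodular_compose[OF super[folded submodular_on_uminus_iff] g_sorted] g_range
    by (simp_all add: \<psi>_def \<theta>_def)
  from LP_optimal_value[OF d perm this \<psi>_nonneg \<theta>_pos J J_min] show ?thesis
    unfolding Let_def X_def[symmetric] R_def[symmetric] \<psi>_def[symmetric] \<theta>_def[symmetric] m .
qed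

end
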